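(* For every integer $k\ge 2$ there exists a cubic graph $G$ with a proper $5$-edge-coloring $c$ such that $|N_G(c)|=k$.
   Context: Graphs are finite, undirected, loopless, and may contain parallel edges. A proper $5$-edge-coloring of $G$ is a map $c:E(G)\to\{1,\dots,5\}$ with adjacent edges receiving different colors. For such $c$ and a vertex $v$, $S_c(v)$ is the set of colors on edges incident to $v$. An edge $uv$ of a cubic graph is poor if $|S_c(u)\cup S_c(v)|=3$, rich if $|S_c(u)\cup S_c(v)|=5$, and abnormal if it is neither poor nor rich. $N_G(c)$ denotes the set of abnormal edges of $G$ with respect to $c$. *)

theory Defs
  imports Main
begin

text \<open>Parallel edges are distinct edges with the same endpoint set.\<close>
definition multigraph :: "'v set \<Rightarrow> 'e set \<Rightarrow> ('e \<Rightarrow> 'v set) \<Rightarrow> bool" where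
  "multigraph V E ends \<longleftrightarrow> finite V \<and> finite E \<and>
     (\<forall>e\<in>E. ends e \<subseteq> V \<and> card (ends e) = 2)"

definition incident_edges :: "'e set \<Rightarrow> ('e \<Rightarrow> 'v set) \<Rightarrow> 'v \<Rightarrow> 'e set" where
  "incident_edges E ends v = {e \<in> E. v \<in> ends e}"

definition cubic :: "'v set \<Rightarrow> 'e set \<Rightarrow> ('e \<Rightarrow> 'v set) \<Rightarrow> bool" where
  "cubic V E ends \<longleftrightarrow> multigraph V E ends \<and>
     (\<forall>v\<in>V. card (incident_edges E ends v) = 3)"

definition proper_5_edge_coloring :: "'e set \<Rightarrow> ('e \<Rightarrow> 'v set) \<Rightarrow> ('e \<Rightarrow> nat) \<Rightarrow> bool" where
  "proper_5_edge_coloring E ends c \<longleftrightarrow>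
     (\<forall>e\<in>E. c e \<in> {1..5}) \<and>
     (\<forall>e\<in>E. \<forall>f\<in>E. e \<noteq> f \<and> ends e \<inter> ends f \<noteq> {} \<longrightarrow> c e \<noteq> c f)"

definition color_set :: "'e set \<Rightarrow> ('e \<Rightarrow> 'v set) \<Rightarrow> ('e \<Rightarrow> nat) \<Rightarrow> 'v \<Rightarrow> nat set" where
  "color_set E ends c v = c ` incident_edges E ends v"

definition edge_colors_union :: "'e set \<Rightarrow> ('e \<Rightarrow> 'v set) \<Rightarrow> ('e \<Rightarrow> nat) \<Rightarrow> 'e \<Rightarrow> nat set" where
  "edge_colors_union E ends c e = (\<Union>v\<in>ends e. color_set E ends c v)"

definition poor_edge where
  "poor_edge E ends c e \<longleftrightarrow> card (edge_colors_union E ends c e) = 3"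

definition rich_edge where
  "rich_edge E ends c e \<longleftrightarrow> card (edge_colors_union E ends c e) = 5"

definition abnormal_edges :: "'e set \<Rightarrow> ('e \<Rightarrow> 'v set) \<Rightarrow> ('e \<Rightarrow> nat) \<Rightarrow> 'e set" where
  "abnormal_edges E ends c = {e \<in> E. \<not> poor_edge E ends c e \<and> \<not> rich_edge E ends c e}"

end

theory Submission
  imports Defs
begin

text \<open>Two small cubic multigraphs carry proper 5-edge-colorings with exactly 2 and 3 abnormal
  edges. Abnormality of an edge only depends on the colors around its two endpoints, so in a
  disjoint union the abnormal edges are those of the two parts and their numbers add up. Every
  k \<ge> 2 is a sum of 2s and 3s.\<close>

lemma incident_edges_relabel:
  assumes "inj f" "inj g" "\<And>e. e \<in> E \<Longrightarrow> ends' (g e) = f ` ends e"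
  shows "incident_edges (g ` E) ends' (f v) = g ` incident_edges E ends v"
  using assms unfolding incident_edges_def by (auto simp: inj_image_mem_iff)

lemma edge_colors_union_relabel:
  assumes "inj f" "inj g" "\<And>e. e \<in> E \<Longrightarrow> ends' (g e) = f ` ends e"
    and "\<And>e. e \<in> E \<Longrightarrow> c' (g e) = c e" and "e \<in> E"
  shows "edge_colors_union (g ` E) ends' c' (g e) = edge_colors_union E ends c e"
proof -
  have "color_set (g ` E) ends' c' (f v) = color_set E ends c v" for v
  proof -
    have "color_set (g ` E) ends' c' (f v) = (c' \<circ> g) ` incident_edges E ends v"
      by (simp add: color_set_def incident_edges_relabel[of f g E ends' ends, OF assms(1-3)] image_comp)
    also have "\<dots> = color_set E ends c v"
      unfolding color_set_def using assms(4) by (auto simp: incident_edges_def)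
    finally show ?thesis .
  qed
  then show ?thesis
    unfolding edge_colors_union_def using assms(3,5) by simp
qed

lemma relabel:
  assumes "inj f" "inj g" "\<And>e. e \<in> E \<Longrightarrow> ends' (g e) = f ` ends e"
    and "\<And>e. e \<in> E \<Longrightarrow> c' (g e) = c e"
    and "cubic V E ends" "proper_5_edge_coloring E ends c"
  shows "cubic (f ` V) (g ` E) ends'" "proper_5_edge_coloring (g ` E) ends' c'"
    and "abnormal_edges (g ` E) ends' c' = g ` abnormal_edges E ends c"
proof -
  show "cubic (f ` V) (g ` E) ends'"
    using assms(5) assms(1-3) incident_edges_relabel[of f g E ends' ends, OF assms(1-3)]
    unfolding cubic_def multigraph_def
    by (auto simp: card_image inj_on_subset[OF assms(2)] inj_on_subset[OF assms(1)] image_mono)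
  show "proper_5_edge_coloring (g ` E) ends' c'"
    using assms(6) assms(1-4) unfolding proper_5_edge_coloring_def
    by (auto simp: inj_eq image_Int[symmetric])
  show "abnormal_edges (g ` E) ends' c' = g ` abnormal_edges E ends c"
    unfolding abnormal_edges_def poor_edge_def rich_edge_def
    using edge_colors_union_relabel[of f g E ends' ends c' c, OF assms(1-4)] by auto
qed

lemma relabel_congruent:
  assumes "\<And>e. e \<in> E \<Longrightarrow> ends' e = ends e" "\<And>e. e \<in> E \<Longrightarrow> c' e = c e"
    and "cubic V E ends" "proper_5_edge_coloring E ends c"
  shows "cubic V E ends'" "proper_5_edge_coloring E ends' c'"
    and "abnormal_edges E ends' c' = abnormal_edges E ends c"
  using relabel[of id id E ends' ends c' c V] assms by simp_all

lemma disjoint_union: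
  assumes G1: "cubic V1 E1 ends" "proper_5_edge_coloring E1 ends c"
    and G2: "cubic V2 E2 ends" "proper_5_edge_coloring E2 ends c"
    and "V1 \<inter> V2 = {}"
  shows "cubic (V1 \<union> V2) (E1 \<union> E2) ends" "proper_5_edge_coloring (E1 \<union> E2) ends c"
    and "abnormal_edges (E1 \<union> E2) ends c = abnormal_edges E1 ends c \<union> abnormal_edges E2 ends c"
proof -
  have ends1: "\<And>e. e \<in> E1 \<Longrightarrow> ends e \<subseteq> V1 \<and> ends e \<noteq> {}"
    and ends2: "\<And>e. e \<in> E2 \<Longrightarrow> ends e \<subseteq> V2 \<and> ends e \<noteq> {}"
    using G1(1) G2(1) unfolding cubic_def multigraph_def by fastforce+
  have no_cross: "ends e \<inter> ends f = {}" if "e \<in> E1" "f \<in> E2" for e f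
    using ends1[OF that(1)] ends2[OF that(2)] assms(5) by blast
  have inc1: "incident_edges (E1 \<union> E2) ends v = incident_edges E1 ends v" if "v \<in> V1" for v
    using that ends2 assms(5) unfolding incident_edges_def by blast
  have inc2: "incident_edges (E1 \<union> E2) ends v = incident_edges E2 ends v" if "v \<in> V2" for v
    using that ends1 assms(5) unfolding incident_edges_def by blast
  have ecu1: "edge_colors_union (E1 \<union> E2) ends c e = edge_colors_union E1 ends c e" if "e \<in> E1" for e
    unfolding edge_colors_union_def color_set_def using ends1[OF that] inc1 by (auto simp: subset_iff)
  have ecu2: "edge_colors_union (E1 \<union> E2) ends c e = edge_colors_union E2 ends c e" if "e \<in> E2" for e
    unfolding edge_colors_union_def color_set_def using ends2[OF that] inc2 by (auto simp: subset_iff)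
  show "cubic (V1 \<union> V2) (E1 \<union> E2) ends"
    using G1(1) G2(1) inc1 inc2 unfolding cubic_def multigraph_def by auto
  show "proper_5_edge_coloring (E1 \<union> E2) ends c"
    using G1(2) G2(2) no_cross unfolding proper_5_edge_coloring_def
    by (metis Int_commute Un_iff)
  show "abnormal_edges (E1 \<union> E2) ends c = abnormal_edges E1 ends c \<union> abnormal_edges E2 ends c"
    unfolding abnormal_edges_def poor_edge_def rich_edge_def using ecu1 ecu2 by auto
qed

definition abnormal_count_realizable :: "nat \<Rightarrow> bool" where
  "abnormal_count_realizable k \<longleftrightarrow>
     (\<exists>(V::nat set) (E::nat set) (ends::nat \<Rightarrow> nat set) (c::nat \<Rightarrow> nat).
        cubic V E ends \<and> proper_5_edge_coloring E ends c \<and> card (abnormal_edges E ends c) = k)"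

lemma abnormal_count_realizable_add:
  assumes "abnormal_count_realizable a" "abnormal_count_realizable b"
  shows "abnormal_count_realizable (a + b)"
proof -
  obtain V1 E1 :: "nat set" and ends1 :: "nat \<Rightarrow> nat set" and c1 :: "nat \<Rightarrow> nat"
    where G1: "cubic V1 E1 ends1" "proper_5_edge_coloring E1 ends1 c1"
    "card (abnormal_edges E1 ends1 c1) = a"
    using assms(1) unfolding abnormal_count_realizable_def by blast
  obtain V0 E0 :: "nat set" and ends0 :: "nat \<Rightarrow> nat set" and c0 :: "nat \<Rightarrow> nat"
    where G0: "cubic V0 E0 ends0" "proper_5_edge_coloring E0 ends0 c0"
    "card (abnormal_edges E0 ends0 c0) = b"
    using assms(2) unfolding abnormal_count_realizable_def by blast
  have "finite V1" "finite E1"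
    using G1(1) unfolding cubic_def multigraph_def by auto
  then obtain s t where s: "\<forall>v\<in>V1. v < s" and t: "\<forall>e\<in>E1. e < t"
    unfolding finite_nat_set_iff_bounded by blast
  define ends where "ends e = (if e \<in> E1 then ends1 e else (+) s ` ends0 (e - t))" for e
  define c where "c e = (if e \<in> E1 then c1 e else c0 (e - t))" for e
  define E2 where "E2 = (+) t ` E0"
  have inj: "inj ((+) s :: nat \<Rightarrow> nat)" "inj ((+) t :: nat \<Rightarrow> nat)"
    by (auto simp: inj_def)
  have disj: "V1 \<inter> (+) s ` V0 = {}" "E1 \<inter> E2 = {}"
    using s t unfolding E2_def by auto
  have on_E1: "ends e = ends1 e" "c e = c1 e" if "e \<in> E1" for e
    using that by (simp_all add: ends_def c_def)
  have on_E2: "ends (t + e) = (+) s ` ends0 e" "c (t + e) = c0 e" if "e \<in> E0" for e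
    using that disj(2) by (auto simp: ends_def c_def E2_def)
  note G1' = relabel_congruent[of E1 ends ends1 c c1, OF on_E1 G1(1,2)]
  note G2 = relabel[OF inj, of E0 ends ends0 c c0, OF on_E2 G0(1,2), folded E2_def]
  have "cubic (V1 \<union> (+) s ` V0) (E1 \<union> E2) ends" "proper_5_edge_coloring (E1 \<union> E2) ends c"
    and abn: "abnormal_edges (E1 \<union> E2) ends c = abnormal_edges E1 ends c \<union> abnormal_edges E2 ends c"
    using disjoint_union[OF G1'(1,2) G2(1,2) disj(1)] by simp_all
  moreover have "card (abnormal_edges (E1 \<union> E2) ends c) = a + b"
  proof -
    have "finite E1" "finite E2"
      using G1(1) G0(1) unfolding cubic_def multigraph_def E2_def by auto
    then have "card (abnormal_edges (E1 \<union> E2) ends c) =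
        card (abnormal_edges E1 ends c) + card (abnormal_edges E2 ends c)"
      unfolding abn using disj(2) by (intro card_Un_disjoint) (auto simp: abnormal_edges_def)
    then show ?thesis
      using G1(3) G0(3) inj(2) by (simp add: G1'(3) G2(3) card_image inj_on_subset)
  qed
  ultimately show ?thesis
    unfolding abnormal_count_realizable_def by blast
qed

definition two_abnormal_ends :: "nat \<Rightarrow> nat set" where
  "two_abnormal_ends e = [{0,2},{0,3},{0,3},{1,2},{1,2},{1,3}] ! e"

definition two_abnormal_coloring :: "nat \<Rightarrow> nat" where
  "two_abnormal_coloring e = [1,2,3,2,4,1] ! e"

lemma abnormal_count_realizable_2: "abnormal_count_realizable 2"
proof -
  let ?E = "{0, Suc 0, 2, 3, 4, 5} :: nat set"
  have inc: "incident_edges ?E two_abnormal_ends 0 = {0,1,2}"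
    "incident_edges ?E two_abnormal_ends (Suc 0) = {3,4,5}"
    "incident_edges ?E two_abnormal_ends 2 = {0,3,4}"
    "incident_edges ?E two_abnormal_ends 3 = {1,2,5}"
    by (auto simp: incident_edges_def two_abnormal_ends_def)
  have "cubic {0,1,2,3} ?E two_abnormal_ends"
    unfolding cubic_def multigraph_def by (auto simp: inc two_abnormal_ends_def)
  moreover have "proper_5_edge_coloring ?E two_abnormal_ends two_abnormal_coloring"
    unfolding proper_5_edge_coloring_def
    by (auto simp: two_abnormal_ends_def two_abnormal_coloring_def)
  moreover have "abnormal_edges ?E two_abnormal_ends two_abnormal_coloring = {0,5}"
    unfolding abnormal_edges_def poor_edge_def rich_edge_def edge_colors_union_def color_set_def
    by (auto simp: inc two_abnormal_ends_def two_abnormal_coloring_def card_insert_if)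
  ultimately show ?thesis
    unfolding abnormal_count_realizable_def by fastforce
qed

definition three_abnormal_ends :: "nat \<Rightarrow> nat set" where
  "three_abnormal_ends e = [{0,4},{0,5},{0,5},{1,3},{1,4},{1,4},{2,3},{2,3},{2,5}] ! e"

definition three_abnormal_coloring :: "nat \<Rightarrow> nat" where
  "three_abnormal_coloring e = [1,2,3,1,2,4,2,5,1] ! e"

lemma abnormal_count_realizable_3: "abnormal_count_realizable 3"
proof -
  let ?E = "{0, Suc 0, 2, 3, 4, 5, 6, 7, 8} :: nat set"
  have inc: "incident_edges ?E three_abnormal_ends 0 = {0,1,2}"
    "incident_edges ?E three_abnormal_ends (Suc 0) = {3,4,5}"
    "incident_edges ?E three_abnormal_ends 2 = {6,7,8}"
    "incident_edges ?E three_abnormal_ends 3 = {3,6,7}"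
    "incident_edges ?E three_abnormal_ends 4 = {0,4,5}"
    "incident_edges ?E three_abnormal_ends 5 = {1,2,8}"
    by (auto simp: incident_edges_def three_abnormal_ends_def)
  have "cubic {0,1,2,3,4,5} ?E three_abnormal_ends"
    unfolding cubic_def multigraph_def by (auto simp: inc three_abnormal_ends_def)
  moreover have "proper_5_edge_coloring ?E three_abnormal_ends three_abnormal_coloring"
    unfolding proper_5_edge_coloring_def
    by (auto simp: three_abnormal_ends_def three_abnormal_coloring_def)
  moreover have "abnormal_edges ?E three_abnormal_ends three_abnormal_coloring = {0,3,8}"
    unfolding abnormal_edges_def poor_edge_def rich_edge_def edge_colors_union_def color_set_def
    by (auto simp: inc three_abnormal_ends_def three_abnormal_coloring_def card_insert_if)
  ultimately show ?thesis
    unfolding abnormal_count_realizable_def by fastforce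
qed

lemma abnormal_count_realizable_ge_2: "k \<ge> 2 \<Longrightarrow> abnormal_count_realizable k"
proof (induction k rule: less_induct)
  case (less k)
  consider "k = 2" | "k = 3" | "k \<ge> 4" using less.prems by linarith
  then show ?case
  proof cases
    case 3
    then have "abnormal_count_realizable (2 + (k - 2))"
      by (intro abnormal_count_realizable_add abnormal_count_realizable_2 less.IH) auto
    moreover have "2 + (k - 2) = k"
      using 3 by simp
    ultimately show ?thesis by simp
  qed (use abnormal_count_realizable_2 abnormal_count_realizable_3 in simp_all)
qed

theorem mainTheorem7:
  fixes k :: nat
  assumes "k \<ge> 2"
  shows "\<exists>(V::nat set) (E::nat set) (ends::nat \<Rightarrow> nat set) (c::nat \<Rightarrow> nat).
           cubic V E ends \<and> proper_5_edge_coloring E ends c \<and>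
           card (abnormal_edges E ends c) = k"
  using abnormal_count_realizable_ge_2[OF assms] unfolding abnormal_count_realizable_def .

end
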